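(* Let $D$ be a weak bialgebra in $\mathcal C$ which is a weak crossed biproduct of a coalgebra $C$ and a weak Hopf algebra $B$ (playing the role of the algebra $A$), with preunit $\nu$, precounit $\upsilon$, associated idempotent $\nabla_{C\otimes B}$, coproduct $\delta_{C\otimes B}$ and morphism $\tau_B^C:C\otimes B\rightarrow B\otimes B$. Let $\beta_\nu=(C\otimes\mu_B)\circ(\nu\otimes B)$. If $\delta_{C\otimes B}\circ\beta_\nu=(\beta_\nu\otimes\beta_\nu)\circ\delta_B$, $\tau_B^C=(\varepsilon_C\otimes\delta_B)\circ\nabla_{C\otimes B}$ and $\upsilon=(\varepsilon_C\otimes\varepsilon_B)\circ\nabla_{C\otimes B}$, then there exist morphisms $f:B\rightarrow D$ and $g:D\rightarrow B$ such that $(D,B,f,g)$ is a weak bialgebra with a weak projection.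
   Context: $\mathcal C$ is a strict braided monoidal category with tensor product $\otimes$, unit object $K$ and braiding $c$, in which every idempotent splits. Algebras have unit $\eta$, product $\mu$; coalgebras counit $\varepsilon$, coproduct $\delta$; $f\wedge g=\mu\circ(f\otimes g)\circ\delta$. Weak bialgebra: algebra and coalgebra $D$ with $\delta_D\circ\mu_D=(\mu_D\otimes\mu_D)\circ(D\otimes c_{D,D}\otimes D)\circ(\delta_D\otimes\delta_D)$; $\varepsilon_D\circ\mu_D\circ(\mu_D\otimes D)=((\varepsilon_D\circ\mu_D)\otimes(\varepsilon_D\circ\mu_D))\circ(D\otimes\delta_D\otimes D)=((\varepsilon_D\circ\mu_D)\otimes(\varepsilon_D\circ\mu_D))\circ(D\otimes(c_{D,D}^{-1}\circ\delta_D)\otimes D)$; $(\delta_D\otimes D)\circ\delta_D\circ\eta_D=(D\otimes\mu_D\otimes D)\circ((\delta_D\circ\eta_D)\otimes(\delta_D\circ\eta_D))=(D\otimes(\mu_D\circ c_{D,D}^{-1})\otimes D)\circ((\delta_D\circ\eta_D)\otimes(\delta_D\circ\eta_D))$. Weak Hopf algebra: additionally an antipode $\lambda_D$ with $id_D\wedge\lambda_D=\Pi_D^L$, $\lambda_D\wedge id_D=\Pi_D^R$, $\lambda_D\wedge id_D\wedge\lambda_D=\lambda_D$, where $\Pi_D^L=((\varepsilon_D\circ\mu_D)\otimes D)\circ(D\otimes c_{D,D})\circ((\delta_D\circ\eta_D)\otimes D)$, $\Pi_D^R=(D\otimes(\varepsilon_D\circ\mu_D))\circ(c_{D,D}\otimes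 D)\circ(D\otimes(\delta_D\circ\eta_D))$. Weak projection $(D,B,f,g)$: $D$ weak bialgebra, $B$ weak Hopf algebra, $f:B\rightarrow D$ algebra and coalgebra morphism, $g:D\rightarrow B$ coalgebra morphism, $g\circ f=id_B$, $g\circ\mu_D\circ(D\otimes f)=\mu_B\circ(g\otimes B)$. Weak crossed product on $C\otimes A$ ($A$ algebra, $C$ object): given $\psi_A^C:A\otimes C\rightarrow C\otimes A$ with $(C\otimes\mu_A)\circ(\psi_A^C\otimes A)\circ(A\otimes\psi_A^C)=\psi_A^C\circ(\mu_A\otimes C)$, $\nabla_{C\otimes A}=(C\otimes\mu_A)\circ((\psi_A^C\circ(\eta_A\otimes C))\otimes A)$ (idempotent, image $C\times A$, injection $i_{C\otimes A}$, projection $p_{C\otimes A}$); $\sigma_A^C:C\otimes C\rightarrow C\otimes A$ with $\nabla_{C\otimes A}\circ\sigma_A^C=\sigma_A^C$; twisted condition $(C\otimes\mu_A)\circ(\sigma_A^C\otimes A)\circ(C\otimes\psi_A^C)\circ(\psi_A^C\otimes C)=(C\otimes\mu_A)\circ(\psi_A^C\otimes A)\circ(A\otimes\sigma_A^C)$; cocycle condition $(C\otimes\mu_A)\circ(\sigma_A^C\otimes A)\circ(C\otimes\sigma_A^C)=(C\otimes\mu_A)\circ(\sigma_A^C\otimes A)\circ(C\otimes\psi_A^C)\circ(\sigma_A^C\otimes C)$; product $\mu_{C\otimes A}=(C\otimes\mu_A)\circ(\sigma_A^C\otimes\mu_A)\circ(C\otimes\psi_A^C\otimes A)$. Preunit $\nu:K\rightarrow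 C\otimes A$, with $\beta_\nu=(C\otimes\mu_A)\circ(\nu\otimes A)$: $(C\otimes\mu_A)\circ(\sigma_A^C\otimes A)\circ(C\otimes\psi_A^C)\circ(\nu\otimes C)=\nabla_{C\otimes A}\circ(C\otimes\eta_A)$, $(C\otimes\mu_A)\circ(\sigma_A^C\otimes A)\circ(C\otimes\nu)=\nabla_{C\otimes A}\circ(C\otimes\eta_A)$, $(C\otimes\mu_A)\circ(\psi_A^C\otimes A)\circ(A\otimes\nu)=\beta_\nu$. Then $C\times A$ is an algebra with product $p_{C\otimes A}\circ\mu_{C\otimes A}\circ(i_{C\otimes A}\otimes i_{C\otimes A})$ and unit $p_{C\otimes A}\circ\nu$. Weak crossed coproduct on $C\otimes A$ ($C$ coalgebra, $A$ object): $\chi_A^C:C\otimes A\rightarrow A\otimes C$ with $(\chi_A^C\otimes C)\circ(C\otimes\chi_A^C)\circ(\delta_C\otimes A)=(A\otimes\delta_C)\circ\chi_A^C$; $\Gamma_{C\otimes A}=(C\otimes A\otimes\varepsilon_C)\circ(C\otimes\chi_A^C)\circ(\delta_C\otimes A)$ (idempotent); $\tau_A^C:C\otimes A\rightarrow A\otimes A$ with $\tau_A^C\circ\Gamma_{C\otimes A}=\tau_A^C$; twisted $(\tau_A^C\otimes C)\circ(C\otimes\chi_A^C)\circ(\delta_C\otimes A)=(A\otimes\chi_A^C)\circ(\chi_A^C\otimes A)\circ(C\otimes\tau_A^C)\circ(\delta_C\otimes A)$; cocycle $(\tau_A^C\otimes A)\circ(C\otimes\tau_A^C)\circ(\delta_C\otimes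 A)=(A\otimes\tau_A^C)\circ(\chi_A^C\otimes A)\circ(C\otimes\tau_A^C)\circ(\delta_C\otimes A)$; coproduct $\delta_{C\otimes A}=(C\otimes\chi_A^C\otimes A)\circ(\delta_C\otimes\tau_A^C)\circ(\delta_C\otimes A)$. Precounit $\upsilon:C\otimes A\rightarrow K$, with $\gamma_\upsilon=(C\otimes\upsilon)\circ(\delta_C\otimes A)$: $(A\otimes\upsilon)\circ(\chi_A^C\otimes A)\circ(C\otimes\tau_A^C)\circ(\delta_C\otimes A)=(\varepsilon_C\otimes A)\circ\Gamma_{C\otimes A}$, $(\upsilon\otimes A)\circ(C\otimes\tau_A^C)\circ(\delta_C\otimes A)=(\varepsilon_C\otimes A)\circ\Gamma_{C\otimes A}$, $(\upsilon\otimes C)\circ(C\otimes\chi_A^C)\circ(\delta_C\otimes A)=\gamma_\upsilon$. Then the image of $\Gamma_{C\otimes A}$ (injection $i$, projection $p$) is a coalgebra with coproduct $(p\otimes p)\circ\delta_{C\otimes A}\circ i$ and counit $\upsilon\circ i$. A weak bialgebra $D$ is a weak crossed biproduct of the coalgebra $C$ with the algebra $A$ (morphisms $\psi_A^C,\sigma_A^C,\chi_A^C,\tau_A^C$, preunit $\nu$, precounit $\upsilon$) if: $(C\otimes A,\mu_{C\otimes A})$ is a weak crossed product with preunit $\nu$; $(C\otimes A,\delta_{C\otimes A})$ is a weak crossed coproduct with precounit $\upsilon$; $\nabla_{C\otimes A}=\Gamma_{C\otimes A}$; there is an isomorphism of algebras and coalgebras $C\times A\rightarrow D$; and $(\varepsilon_C\otimes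 A)\circ\nu=\eta_A$, $\upsilon\circ(C\otimes\eta_A)=\varepsilon_C$. *)

theory Defs
  imports Main
begin

text \<open>A category is given by a set of objects, a set of arrows, domain/codomain,
composition (total on the type, meaningful on composable arrows) and identities.
Br a b is the braiding c_{a,b} : a (x) b -> b (x) a, and BrI a b its inverse
c_{a,b}^{-1} : b (x) a -> a (x) b.\<close>

record ('o,'m) bcat =
  Obj  :: "'o set"
  Arr  :: "'m set"
  Dom  :: "'m \<Rightarrow> 'o"
  Cod  :: "'m \<Rightarrow> 'o"
  Comp :: "'m \<Rightarrow> 'm \<Rightarrow> 'm"
  Idm  :: "'o \<Rightarrow> 'm"
  TenO :: "'o \<Rightarrow> 'o \<Rightarrow> 'o"
  Ten  :: "'m \<Rightarrow> 'm \<Rightarrow> 'm"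
  Unit :: "'o"
  Br   :: "'o \<Rightarrow> 'o \<Rightarrow> 'm"
  BrI  :: "'o \<Rightarrow> 'o \<Rightarrow> 'm"

text \<open>An object equipped with (possibly) algebra and coalgebra structure morphisms.\<close>
record ('o,'m) stru =
  carr :: "'o"
  mu   :: "'m"
  eta  :: "'m"
  dlt  :: "'m"
  eps  :: "'m"

locale bc =
  fixes M :: "('o,'m) bcat"
begin

abbreviation cmp (infixr "\<cdot>" 55) where "f \<cdot> g \<equiv> Comp M f g"
abbreviation tn (infixr "\<otimes>" 70) where "f \<otimes> g \<equiv> Ten M f g"
abbreviation tno (infixr "\<odot>" 70) where "a \<odot> b \<equiv> TenO M a b"
abbreviation idm where "idm a \<equiv> Idm M a"
abbreviation K where "K \<equiv> Unit M"
abbreviation c where "c a b \<equiv> Br M a b"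
abbreviation ci where "ci a b \<equiv> BrI M a b"

definition hom :: "'m \<Rightarrow> 'o \<Rightarrow> 'o \<Rightarrow> bool" where
  "hom f a b \<longleftrightarrow> f \<in> Arr M \<and> Dom M f = a \<and> Cod M f = b"

definition sbmc :: bool where
  "sbmc \<longleftrightarrow>
    \<comment> \<open>category\<close>
    (\<forall>f \<in> Arr M. Dom M f \<in> Obj M \<and> Cod M f \<in> Obj M) \<and>
    (\<forall>a \<in> Obj M. hom (idm a) a a) \<and>
    (\<forall>f \<in> Arr M. \<forall>g \<in> Arr M. Dom M g = Cod M f \<longrightarrow> hom (g \<cdot> f) (Dom M f) (Cod M g)) \<and>
    (\<forall>f \<in> Arr M. \<forall>g \<in> Arr M. \<forall>h \<in> Arr M. Dom M g = Cod M f \<longrightarrow> Dom M h = Cod M g \<longrightarrow>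
        (h \<cdot> g) \<cdot> f = h \<cdot> (g \<cdot> f)) \<and>
    (\<forall>f \<in> Arr M. f \<cdot> idm (Dom M f) = f \<and> idm (Cod M f) \<cdot> f = f) \<and>
    \<comment> \<open>strict monoidal structure\<close>
    K \<in> Obj M \<and>
    (\<forall>a \<in> Obj M. \<forall>b \<in> Obj M. a \<odot> b \<in> Obj M) \<and>
    (\<forall>f \<in> Arr M. \<forall>g \<in> Arr M. hom (f \<otimes> g) (Dom M f \<odot> Dom M g) (Cod M f \<odot> Cod M g)) \<and>
    (\<forall>a \<in> Obj M. \<forall>b \<in> Obj M. idm a \<otimes> idm b = idm (a \<odot> b)) \<and>
    (\<forall>f \<in> Arr M. \<forall>g \<in> Arr M. \<forall>f' \<in> Arr M. \<forall>g' \<in> Arr M.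
        Dom M g = Cod M f \<longrightarrow> Dom M g' = Cod M f' \<longrightarrow>
        (g \<cdot> f) \<otimes> (g' \<cdot> f') = (g \<otimes> g') \<cdot> (f \<otimes> f')) \<and>
    (\<forall>a \<in> Obj M. \<forall>b \<in> Obj M. \<forall>d \<in> Obj M. (a \<odot> b) \<odot> d = a \<odot> (b \<odot> d)) \<and>
    (\<forall>a \<in> Obj M. K \<odot> a = a \<and> a \<odot> K = a) \<and>
    (\<forall>f \<in> Arr M. \<forall>g \<in> Arr M. \<forall>h \<in> Arr M. (f \<otimes> g) \<otimes> h = f \<otimes> (g \<otimes> h)) \<and>
    (\<forall>f \<in> Arr M. idm K \<otimes> f = f \<and> f \<otimes> idm K = f) \<and>
    \<comment> \<open>braiding: natural isomorphism satisfying the hexagon axioms\<close>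
    (\<forall>a \<in> Obj M. \<forall>b \<in> Obj M. hom (c a b) (a \<odot> b) (b \<odot> a) \<and> hom (ci a b) (b \<odot> a) (a \<odot> b) \<and>
        c a b \<cdot> ci a b = idm (b \<odot> a) \<and> ci a b \<cdot> c a b = idm (a \<odot> b)) \<and>
    (\<forall>f \<in> Arr M. \<forall>g \<in> Arr M.
        c (Cod M f) (Cod M g) \<cdot> (f \<otimes> g) = (g \<otimes> f) \<cdot> c (Dom M f) (Dom M g)) \<and>
    (\<forall>a \<in> Obj M. \<forall>b \<in> Obj M. \<forall>d \<in> Obj M.
        c a (b \<odot> d) = (idm b \<otimes> c a d) \<cdot> (c a b \<otimes> idm d) \<and>
        c (a \<odot> b) d = (c a d \<otimes> idm b) \<cdot> (idm a \<otimes> c b d)) \<and>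
    \<comment> \<open>every idempotent splits\<close>
    (\<forall>a \<in> Obj M. \<forall>q. hom q a a \<longrightarrow> q \<cdot> q = q \<longrightarrow>
        (\<exists>x \<in> Obj M. \<exists>i p. hom i x a \<and> hom p a x \<and> p \<cdot> i = idm x \<and> i \<cdot> p = q))"

definition algebra :: "('o,'m) stru \<Rightarrow> bool" where
  "algebra A \<longleftrightarrow> (let X = carr A; m = mu A; u = eta A in
     X \<in> Obj M \<and> hom m (X \<odot> X) X \<and> hom u K X \<and>
     m \<cdot> (m \<otimes> idm X) = m \<cdot> (idm X \<otimes> m) \<and>
     m \<cdot> (u \<otimes> idm X) = idm X \<and> m \<cdot> (idm X \<otimes> u) = idm X)"

definition coalgebra :: "('o,'m) stru \<Rightarrow> bool" where
  "coalgebra C \<longleftrightarrow> (let X = carr C; d = dlt C; e = eps C in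
     X \<in> Obj M \<and> hom d X (X \<odot> X) \<and> hom e X K \<and>
     (d \<otimes> idm X) \<cdot> d = (idm X \<otimes> d) \<cdot> d \<and>
     (e \<otimes> idm X) \<cdot> d = idm X \<and> (idm X \<otimes> e) \<cdot> d = idm X)"

definition conv :: "('o,'m) stru \<Rightarrow> 'm \<Rightarrow> 'm \<Rightarrow> 'm" where
  "conv D f g = mu D \<cdot> (f \<otimes> g) \<cdot> dlt D"

definition weak_bialgebra :: "('o,'m) stru \<Rightarrow> bool" where
  "weak_bialgebra D \<longleftrightarrow> algebra D \<and> coalgebra D \<and>
    (let X = carr D; m = mu D; u = eta D; d = dlt D; e = eps D; I = idm X in
     d \<cdot> m = (m \<otimes> m) \<cdot> (I \<otimes> c X X \<otimes> I) \<cdot> (d \<otimes> d) \<and>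
     e \<cdot> m \<cdot> (m \<otimes> I) = ((e \<cdot> m) \<otimes> (e \<cdot> m)) \<cdot> (I \<otimes> d \<otimes> I) \<and>
     e \<cdot> m \<cdot> (m \<otimes> I) = ((e \<cdot> m) \<otimes> (e \<cdot> m)) \<cdot> (I \<otimes> (ci X X \<cdot> d) \<otimes> I) \<and>
     (d \<otimes> I) \<cdot> d \<cdot> u = (I \<otimes> m \<otimes> I) \<cdot> ((d \<cdot> u) \<otimes> (d \<cdot> u)) \<and>
     (d \<otimes> I) \<cdot> d \<cdot> u = (I \<otimes> (m \<cdot> ci X X) \<otimes> I) \<cdot> ((d \<cdot> u) \<otimes> (d \<cdot> u)))"

definition PiL :: "('o,'m) stru \<Rightarrow> 'm" where
  "PiL D = ((eps D \<cdot> mu D) \<otimes> idm (carr D)) \<cdot> (idm (carr D) \<otimes> c (carr D) (carr D)) \<cdot>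
           ((dlt D \<cdot> eta D) \<otimes> idm (carr D))"

definition PiR :: "('o,'m) stru \<Rightarrow> 'm" where
  "PiR D = (idm (carr D) \<otimes> (eps D \<cdot> mu D)) \<cdot> (c (carr D) (carr D) \<otimes> idm (carr D)) \<cdot>
           (idm (carr D) \<otimes> (dlt D \<cdot> eta D))"

definition weak_hopf :: "('o,'m) stru \<Rightarrow> 'm \<Rightarrow> bool" where
  "weak_hopf D lam \<longleftrightarrow> weak_bialgebra D \<and> hom lam (carr D) (carr D) \<and>
     conv D (idm (carr D)) lam = PiL D \<and> conv D lam (idm (carr D)) = PiR D \<and>
     conv D (conv D lam (idm (carr D))) lam = lam"

definition alg_mor :: "('o,'m) stru \<Rightarrow> ('o,'m) stru \<Rightarrow> 'm \<Rightarrow> bool" where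
  "alg_mor A B f \<longleftrightarrow> hom f (carr A) (carr B) \<and>
     f \<cdot> mu A = mu B \<cdot> (f \<otimes> f) \<and> f \<cdot> eta A = eta B"

definition coalg_mor :: "('o,'m) stru \<Rightarrow> ('o,'m) stru \<Rightarrow> 'm \<Rightarrow> bool" where
  "coalg_mor A B f \<longleftrightarrow> hom f (carr A) (carr B) \<and>
     dlt B \<cdot> f = (f \<otimes> f) \<cdot> dlt A \<and> eps B \<cdot> f = eps A"

definition weak_projection :: "('o,'m) stru \<Rightarrow> ('o,'m) stru \<Rightarrow> 'm \<Rightarrow> 'm \<Rightarrow> 'm \<Rightarrow> bool" where
  "weak_projection D B lam f g \<longleftrightarrow> weak_bialgebra D \<and> weak_hopf B lam \<and>
     alg_mor B D f \<and> coalg_mor B D f \<and> coalg_mor D B g \<and>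
     g \<cdot> f = idm (carr B) \<and>
     g \<cdot> mu D \<cdot> (idm (carr D) \<otimes> f) = mu B \<cdot> (g \<otimes> idm (carr B))"

definition nabla :: "('o,'m) stru \<Rightarrow> 'o \<Rightarrow> 'm \<Rightarrow> 'm" where
  "nabla A C psi = (idm C \<otimes> mu A) \<cdot> ((psi \<cdot> (eta A \<otimes> idm C)) \<otimes> idm (carr A))"

definition beta :: "('o,'m) stru \<Rightarrow> 'o \<Rightarrow> 'm \<Rightarrow> 'm" where
  "beta A C nu = (idm C \<otimes> mu A) \<cdot> (nu \<otimes> idm (carr A))"

definition mu_cp :: "('o,'m) stru \<Rightarrow> 'o \<Rightarrow> 'm \<Rightarrow> 'm \<Rightarrow> 'm" where
  "mu_cp A C psi sigma = (idm C \<otimes> mu A) \<cdot> (sigma \<otimes> mu A) \<cdot> (idm C \<otimes> psi \<otimes> idm (carr A))"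

definition weak_crossed_product ::
  "('o,'m) stru \<Rightarrow> 'o \<Rightarrow> 'm \<Rightarrow> 'm \<Rightarrow> 'm \<Rightarrow> bool" where
  "weak_crossed_product A C psi sigma nu \<longleftrightarrow>
    (let X = carr A; m = mu A; u = eta A; IA = idm X; IC = idm C; N = nabla A C psi in
     algebra A \<and> C \<in> Obj M \<and>
     hom psi (X \<odot> C) (C \<odot> X) \<and> hom sigma (C \<odot> C) (C \<odot> X) \<and> hom nu K (C \<odot> X) \<and>
     (IC \<otimes> m) \<cdot> (psi \<otimes> IA) \<cdot> (IA \<otimes> psi) = psi \<cdot> (m \<otimes> IC) \<and>
     N \<cdot> sigma = sigma \<and>
     (IC \<otimes> m) \<cdot> (sigma \<otimes> IA) \<cdot> (IC \<otimes> psi) \<cdot> (psi \<otimes> IC) = (IC \<otimes> m) \<cdot> (psi \<otimes> IA) \<cdot> (IA \<otimes> sigma) \<and>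
     (IC \<otimes> m) \<cdot> (sigma \<otimes> IA) \<cdot> (IC \<otimes> sigma) =
        (IC \<otimes> m) \<cdot> (sigma \<otimes> IA) \<cdot> (IC \<otimes> psi) \<cdot> (sigma \<otimes> IC) \<and>
     (IC \<otimes> m) \<cdot> (sigma \<otimes> IA) \<cdot> (IC \<otimes> psi) \<cdot> (nu \<otimes> IC) = N \<cdot> (IC \<otimes> u) \<and>
     (IC \<otimes> m) \<cdot> (sigma \<otimes> IA) \<cdot> (IC \<otimes> nu) = N \<cdot> (IC \<otimes> u) \<and>
     (IC \<otimes> m) \<cdot> (psi \<otimes> IA) \<cdot> (IA \<otimes> nu) = beta A C nu)"

definition gamma :: "('o,'m) stru \<Rightarrow> 'o \<Rightarrow> 'm \<Rightarrow> 'm" where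
  "gamma C A chi = (idm (carr C) \<otimes> idm A \<otimes> eps C) \<cdot> (idm (carr C) \<otimes> chi) \<cdot> (dlt C \<otimes> idm A)"

definition delta_cp :: "('o,'m) stru \<Rightarrow> 'o \<Rightarrow> 'm \<Rightarrow> 'm \<Rightarrow> 'm" where
  "delta_cp C A chi tau = (idm (carr C) \<otimes> chi \<otimes> idm A) \<cdot> (dlt C \<otimes> tau) \<cdot> (dlt C \<otimes> idm A)"

definition weak_crossed_coproduct ::
  "('o,'m) stru \<Rightarrow> 'o \<Rightarrow> 'm \<Rightarrow> 'm \<Rightarrow> 'm \<Rightarrow> bool" where
  "weak_crossed_coproduct C A chi tau ups \<longleftrightarrow>
    (let Y = carr C; d = dlt C; e = eps C; IA = idm A; IC = idm Y; G = gamma C A chi in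
     coalgebra C \<and> A \<in> Obj M \<and>
     hom chi (Y \<odot> A) (A \<odot> Y) \<and> hom tau (Y \<odot> A) (A \<odot> A) \<and> hom ups (Y \<odot> A) K \<and>
     (chi \<otimes> IC) \<cdot> (IC \<otimes> chi) \<cdot> (d \<otimes> IA) = (IA \<otimes> d) \<cdot> chi \<and>
     tau \<cdot> G = tau \<and>
     (tau \<otimes> IC) \<cdot> (IC \<otimes> chi) \<cdot> (d \<otimes> IA) =
        (IA \<otimes> chi) \<cdot> (chi \<otimes> IA) \<cdot> (IC \<otimes> tau) \<cdot> (d \<otimes> IA) \<and>
     (tau \<otimes> IA) \<cdot> (IC \<otimes> tau) \<cdot> (d \<otimes> IA) =
        (IA \<otimes> tau) \<cdot> (chi \<otimes> IA) \<cdot> (IC \<otimes> tau) \<cdot> (d \<otimes> IA) \<and>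
     (IA \<otimes> ups) \<cdot> (chi \<otimes> IA) \<cdot> (IC \<otimes> tau) \<cdot> (d \<otimes> IA) = (e \<otimes> IA) \<cdot> G \<and>
     (ups \<otimes> IA) \<cdot> (IC \<otimes> tau) \<cdot> (d \<otimes> IA) = (e \<otimes> IA) \<cdot> G \<and>
     (ups \<otimes> IC) \<cdot> (IC \<otimes> chi) \<cdot> (d \<otimes> IA) = (IC \<otimes> ups) \<cdot> (d \<otimes> IA))"

text \<open>The object C x A is the image of the idempotent nabla = Gamma, given by a splitting
(X, i, p); the algebra and coalgebra structures on C x A are the induced ones, and
there is an isomorphism phi : C x A -> D (with inverse phi') of algebras and coalgebras.\<close>
definition weak_crossed_biproduct ::
  "('o,'m) stru \<Rightarrow> ('o,'m) stru \<Rightarrow> ('o,'m) stru \<Rightarrow>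
   'm \<Rightarrow> 'm \<Rightarrow> 'm \<Rightarrow> 'm \<Rightarrow> 'm \<Rightarrow> 'm \<Rightarrow> bool" where
  "weak_crossed_biproduct D C A psi sigma chi tau nu ups \<longleftrightarrow>
    weak_bialgebra D \<and> coalgebra C \<and> algebra A \<and>
    weak_crossed_product A (carr C) psi sigma nu \<and>
    weak_crossed_coproduct C (carr A) chi tau ups \<and>
    nabla A (carr C) psi = gamma C (carr A) chi \<and>
    (\<exists>X i p phi phi'. X \<in> Obj M \<and>
        hom i X (carr C \<odot> carr A) \<and> hom p (carr C \<odot> carr A) X \<and>
        p \<cdot> i = idm X \<and> i \<cdot> p = nabla A (carr C) psi \<and>
        hom phi' (carr D) X \<and> phi \<cdot> phi' = idm (carr D) \<and> phi' \<cdot> phi = idm X \<and>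
        (let P = \<lparr>carr = X,
                  mu = p \<cdot> mu_cp A (carr C) psi sigma \<cdot> (i \<otimes> i),
                  eta = p \<cdot> nu,
                  dlt = (p \<otimes> p) \<cdot> delta_cp C (carr A) chi tau \<cdot> i,
                  eps = ups \<cdot> i\<rparr>
         in alg_mor P D phi \<and> coalg_mor P D phi)) \<and>
    (eps C \<otimes> idm (carr A)) \<cdot> nu = eta A \<and>
    ups \<cdot> (idm (carr C) \<otimes> eta A) = eps C"

end

end

theory Submission
  imports Defs
begin

text \<open>Take f = phi \<circ> p \<circ> beta_nu and g = (eps_C \<otimes> B) \<circ> i \<circ> phi\<inverse>, where (i, p) splits nabla and
  phi : C \<times> B \<rightarrow> D is the given isomorphism. The preunit conditions show that nabla fixes beta_nu,
  that beta_nu is multiplicative, and that the crossed product with beta_nu on the right is just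
  right multiplication in B; hence f is an algebra morphism, g \<circ> f = id, and g is right B-linear
  along f. The hypothesis on delta_{C\<otimes>B} \<circ> beta_nu makes f a coalgebra morphism. Since tau is
  trivial, (eps_C \<otimes> B) \<circ> nabla = (B \<otimes> eps_C) \<circ> chi turns delta_{C\<otimes>B} into delta_B, so g is a
  coalgebra morphism.\<close>

locale strict_monoidal = bc +
  assumes sbmc: "sbmc"
begin

lemma dom_obj [simp]: "f \<in> Arr M \<Longrightarrow> Dom M f \<in> Obj M"
  using sbmc unfolding sbmc_def by (elim conjE) (blast | simp)
lemma cod_obj [simp]: "f \<in> Arr M \<Longrightarrow> Cod M f \<in> Obj M"
  using sbmc unfolding sbmc_def by (elim conjE) (blast | simp)
lemma id_arr [simp]: "a \<in> Obj M \<Longrightarrow> idm a \<in> Arr M"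
  using sbmc unfolding sbmc_def hom_def by (elim conjE) (blast | simp)
lemma id_dom [simp]: "a \<in> Obj M \<Longrightarrow> Dom M (idm a) = a"
  using sbmc unfolding sbmc_def hom_def by (elim conjE) (blast | simp)
lemma id_cod [simp]: "a \<in> Obj M \<Longrightarrow> Cod M (idm a) = a"
  using sbmc unfolding sbmc_def hom_def by (elim conjE) (blast | simp)
lemma comp_arr [simp]: "f \<in> Arr M \<Longrightarrow> g \<in> Arr M \<Longrightarrow> Dom M g = Cod M f \<Longrightarrow> g \<cdot> f \<in> Arr M"
  using sbmc unfolding sbmc_def hom_def by (elim conjE) (blast | simp)
lemma comp_dom [simp]: "f \<in> Arr M \<Longrightarrow> g \<in> Arr M \<Longrightarrow> Dom M g = Cod M f \<Longrightarrow> Dom M (g \<cdot> f) = Dom M f"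
  using sbmc unfolding sbmc_def hom_def by (elim conjE) (blast | simp)
lemma comp_cod [simp]: "f \<in> Arr M \<Longrightarrow> g \<in> Arr M \<Longrightarrow> Dom M g = Cod M f \<Longrightarrow> Cod M (g \<cdot> f) = Cod M g"
  using sbmc unfolding sbmc_def hom_def by (elim conjE) (blast | simp)
lemma comp_assoc [simp]:
  "f \<in> Arr M \<Longrightarrow> g \<in> Arr M \<Longrightarrow> h \<in> Arr M \<Longrightarrow> Dom M g = Cod M f \<Longrightarrow> Dom M h = Cod M g \<Longrightarrow>
   (h \<cdot> g) \<cdot> f = h \<cdot> (g \<cdot> f)"
  using sbmc unfolding sbmc_def by (elim conjE) (blast | simp)
lemma comp_id_right [simp]: "f \<in> Arr M \<Longrightarrow> a = Dom M f \<Longrightarrow> f \<cdot> idm a = f"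
  using sbmc unfolding sbmc_def by (elim conjE) (blast | simp)
lemma comp_id_left [simp]: "f \<in> Arr M \<Longrightarrow> a = Cod M f \<Longrightarrow> idm a \<cdot> f = f"
  using sbmc unfolding sbmc_def by (elim conjE) (blast | simp)
lemma unit_obj [simp]: "K \<in> Obj M"
  using sbmc unfolding sbmc_def by (elim conjE) (blast | simp)
lemma tensor_obj [simp]: "a \<in> Obj M \<Longrightarrow> b \<in> Obj M \<Longrightarrow> a \<odot> b \<in> Obj M"
  using sbmc unfolding sbmc_def by (elim conjE) (blast | simp)
lemma tensor_arr [simp]: "f \<in> Arr M \<Longrightarrow> g \<in> Arr M \<Longrightarrow> f \<otimes> g \<in> Arr M"
  using sbmc unfolding sbmc_def hom_def by (elim conjE) (blast | simp)
lemma tensor_dom [simp]: "f \<in> Arr M \<Longrightarrow> g \<in> Arr M \<Longrightarrow> Dom M (f \<otimes> g) = Dom M f \<odot> Dom M g"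
  using sbmc unfolding sbmc_def hom_def by (elim conjE) (blast | simp)
lemma tensor_cod [simp]: "f \<in> Arr M \<Longrightarrow> g \<in> Arr M \<Longrightarrow> Cod M (f \<otimes> g) = Cod M f \<odot> Cod M g"
  using sbmc unfolding sbmc_def hom_def by (elim conjE) (blast | simp)
lemma tensor_id: "a \<in> Obj M \<Longrightarrow> b \<in> Obj M \<Longrightarrow> idm a \<otimes> idm b = idm (a \<odot> b)"
  using sbmc unfolding sbmc_def by (elim conjE) (blast | simp)
lemma interchange:
  "f \<in> Arr M \<Longrightarrow> g \<in> Arr M \<Longrightarrow> f' \<in> Arr M \<Longrightarrow> g' \<in> Arr M \<Longrightarrow>
   Dom M g = Cod M f \<Longrightarrow> Dom M g' = Cod M f' \<Longrightarrow> (g \<cdot> f) \<otimes> (g' \<cdot> f') = (g \<otimes> g') \<cdot> (f \<otimes> f')"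
  using sbmc unfolding sbmc_def by (elim conjE) (blast | simp)
lemma tensor_obj_assoc [simp]:
  "a \<in> Obj M \<Longrightarrow> b \<in> Obj M \<Longrightarrow> d \<in> Obj M \<Longrightarrow> (a \<odot> b) \<odot> d = a \<odot> (b \<odot> d)"
  using sbmc unfolding sbmc_def by (elim conjE) (blast | simp)
lemma tensor_obj_unit_left [simp]: "a \<in> Obj M \<Longrightarrow> K \<odot> a = a"
  using sbmc unfolding sbmc_def by (elim conjE) (blast | simp)
lemma tensor_obj_unit_right [simp]: "a \<in> Obj M \<Longrightarrow> a \<odot> K = a"
  using sbmc unfolding sbmc_def by (elim conjE) (blast | simp)
lemma tensor_assoc:
  "f \<in> Arr M \<Longrightarrow> g \<in> Arr M \<Longrightarrow> h \<in> Arr M \<Longrightarrow> (f \<otimes> g) \<otimes> h = f \<otimes> (g \<otimes> h)"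
  using sbmc unfolding sbmc_def by (elim conjE) (blast | simp)
lemma tensor_unit_left [simp]: "f \<in> Arr M \<Longrightarrow> idm K \<otimes> f = f"
  using sbmc unfolding sbmc_def by (elim conjE) (blast | simp)
lemma tensor_unit_right [simp]: "f \<in> Arr M \<Longrightarrow> f \<otimes> idm K = f"
  using sbmc unfolding sbmc_def by (elim conjE) (blast | simp)

lemma tensor_comp:
  "f \<in> Arr M \<Longrightarrow> g \<in> Arr M \<Longrightarrow> f' \<in> Arr M \<Longrightarrow> g' \<in> Arr M \<Longrightarrow>
   Dom M g = Cod M f \<Longrightarrow> Dom M g' = Cod M f' \<Longrightarrow> (g \<otimes> g') \<cdot> (f \<otimes> f') = (g \<cdot> f) \<otimes> (g' \<cdot> f')"
  by (simp add: interchange)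

lemma id_tensor_obj: "a \<in> Obj M \<Longrightarrow> b \<in> Obj M \<Longrightarrow> idm (a \<odot> b) = idm a \<otimes> idm b"
  by (simp add: tensor_id)

lemma id_tensor_comp:
  "a \<in> Obj M \<Longrightarrow> f \<in> Arr M \<Longrightarrow> g \<in> Arr M \<Longrightarrow> Dom M g = Cod M f \<Longrightarrow>
   idm a \<otimes> (g \<cdot> f) = (idm a \<otimes> g) \<cdot> (idm a \<otimes> f)"
  using interchange[of "idm a" "idm a" f g] by simp

lemma comp_tensor_id:
  "a \<in> Obj M \<Longrightarrow> f \<in> Arr M \<Longrightarrow> g \<in> Arr M \<Longrightarrow> Dom M g = Cod M f \<Longrightarrow>
   (g \<cdot> f) \<otimes> idm a = (g \<otimes> idm a) \<cdot> (f \<otimes> idm a)"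
  using interchange[of f g "idm a" "idm a"] by simp

lemma tensor_factor_right_first:
  "f \<in> Arr M \<Longrightarrow> g \<in> Arr M \<Longrightarrow> f \<otimes> g = (f \<otimes> idm (Cod M g)) \<cdot> (idm (Dom M f) \<otimes> g)"
  using interchange[of "idm (Dom M f)" f g "idm (Cod M g)"] by simp

lemma tensor_factor_left_first:
  "f \<in> Arr M \<Longrightarrow> g \<in> Arr M \<Longrightarrow> f \<otimes> g = (idm (Cod M f) \<otimes> g) \<cdot> (f \<otimes> idm (Dom M g))"
  using interchange[of f "idm (Cod M f)" "idm (Dom M g)" g] by simp

lemma comp_eq_precompose:
  "g \<cdot> f = h \<Longrightarrow> f \<in> Arr M \<Longrightarrow> g \<in> Arr M \<Longrightarrow> z \<in> Arr M \<Longrightarrow>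
   Dom M g = Cod M f \<Longrightarrow> Dom M f = Cod M z \<Longrightarrow> g \<cdot> (f \<cdot> z) = h \<cdot> z"
  by (metis comp_assoc)

lemma comp3_eq_precompose:
  assumes "h \<cdot> g \<cdot> f = k" "f \<in> Arr M" "g \<in> Arr M" "h \<in> Arr M" "z \<in> Arr M"
    "Dom M g = Cod M f" "Dom M h = Cod M g" "Dom M f = Cod M z"
  shows "h \<cdot> (g \<cdot> (f \<cdot> z)) = k \<cdot> z"
proof -
  have "(h \<cdot> g) \<cdot> f = k" using assms by simp
  then have "(h \<cdot> g) \<cdot> (f \<cdot> z) = k \<cdot> z" using comp_eq_precompose[of "h \<cdot> g" f k z] assms by simp
  then show ?thesis using assms by simp
qed

end

locale crossed_product_with_preunit = strict_monoidal M for M :: "('o,'m) bcat" +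
  fixes A :: "('o,'m) stru" and C :: 'o and psi sigma nu :: 'm
  assumes crossed_product: "weak_crossed_product A C psi sigma nu"
begin

abbreviation "IA \<equiv> idm (carr A)"
abbreviation "IC \<equiv> idm C"

lemma crossed_product_typing [simp]:
  "carr A \<in> Obj M" "C \<in> Obj M"
  "mu A \<in> Arr M" "Dom M (mu A) = carr A \<odot> carr A" "Cod M (mu A) = carr A"
  "eta A \<in> Arr M" "Dom M (eta A) = K" "Cod M (eta A) = carr A"
  "psi \<in> Arr M" "Dom M psi = carr A \<odot> C" "Cod M psi = C \<odot> carr A"
  "sigma \<in> Arr M" "Dom M sigma = C \<odot> C" "Cod M sigma = C \<odot> carr A"
  "nu \<in> Arr M" "Dom M nu = K" "Cod M nu = C \<odot> carr A"
  using crossed_product unfolding weak_crossed_product_def algebra_def Let_def hom_def by auto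

lemma mu_assoc: "mu A \<cdot> (mu A \<otimes> IA) = mu A \<cdot> (IA \<otimes> mu A)"
  and mu_eta_left: "mu A \<cdot> (eta A \<otimes> IA) = IA"
  and mu_eta_right: "mu A \<cdot> (IA \<otimes> eta A) = IA"
  using crossed_product unfolding weak_crossed_product_def algebra_def Let_def by auto

lemma preunit_sigma: "(IC \<otimes> mu A) \<cdot> (sigma \<otimes> IA) \<cdot> (IC \<otimes> nu) = nabla A C psi \<cdot> (IC \<otimes> eta A)"
  and preunit_psi: "(IC \<otimes> mu A) \<cdot> (psi \<otimes> IA) \<cdot> (IA \<otimes> nu) = beta A C nu"
  using crossed_product unfolding weak_crossed_product_def Let_def by auto

lemma nabla_typing [simp]:
  "nabla A C psi \<in> Arr M" "Dom M (nabla A C psi) = C \<odot> carr A" "Cod M (nabla A C psi) = C \<odot> carr A"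
  by (simp_all add: nabla_def)

lemma beta_typing [simp]:
  "beta A C nu \<in> Arr M" "Dom M (beta A C nu) = carr A" "Cod M (beta A C nu) = C \<odot> carr A"
  by (simp_all add: beta_def)

lemma mu_cp_typing [simp]:
  "mu_cp A C psi sigma \<in> Arr M" "Dom M (mu_cp A C psi sigma) = C \<odot> carr A \<odot> C \<odot> carr A"
  "Cod M (mu_cp A C psi sigma) = C \<odot> carr A"
  by (simp_all add: mu_cp_def)

lemma right_mult_assoc:
  assumes [simp]: "Q \<in> Arr M" "Cod M Q = C \<odot> carr A"
  shows "((IC \<otimes> mu A) \<cdot> (Q \<otimes> IA)) \<cdot> (idm (Dom M Q) \<otimes> mu A)
       = (IC \<otimes> mu A) \<cdot> (((IC \<otimes> mu A) \<cdot> (Q \<otimes> IA)) \<otimes> IA)"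
proof -
  have 1: "(Q \<otimes> IA) \<cdot> (idm (Dom M Q) \<otimes> mu A) = (idm (C \<odot> carr A) \<otimes> mu A) \<cdot> (Q \<otimes> idm (carr A \<odot> carr A))"
    by (simp add: tensor_comp)
  have 2: "(IC \<otimes> mu A) \<cdot> (idm (C \<odot> carr A) \<otimes> mu A) = (IC \<otimes> mu A) \<cdot> (IC \<otimes> (mu A \<otimes> IA))"
    by (simp add: id_tensor_obj tensor_assoc tensor_comp mu_assoc)
  have 3: "((IC \<otimes> mu A) \<cdot> (Q \<otimes> IA)) \<otimes> IA = (IC \<otimes> (mu A \<otimes> IA)) \<cdot> (Q \<otimes> idm (carr A \<odot> carr A))"
    by (simp add: comp_tensor_id tensor_assoc tensor_id)
  show ?thesis using 1 3 comp_eq_precompose[OF 2] by simp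
qed

lemma nabla_right_mult: "nabla A C psi \<cdot> (IC \<otimes> mu A) = (IC \<otimes> mu A) \<cdot> (nabla A C psi \<otimes> IA)"
  using right_mult_assoc[of "psi \<cdot> (eta A \<otimes> IC)"] unfolding nabla_def by simp

lemma beta_mult: "beta A C nu \<cdot> mu A = (IC \<otimes> mu A) \<cdot> (beta A C nu \<otimes> IA)"
  using right_mult_assoc[of nu] unfolding beta_def by simp

lemma beta_eta: "beta A C nu \<cdot> eta A = nu"
proof -
  have 1: "(nu \<otimes> IA) \<cdot> eta A = ((IC \<otimes> IA) \<otimes> eta A) \<cdot> nu"
    using tensor_factor_right_first[of nu "eta A"] tensor_factor_left_first[of nu "eta A"]
    by (simp add: tensor_id)
  have 2: "(IC \<otimes> mu A) \<cdot> ((IC \<otimes> IA) \<otimes> eta A) = IC \<otimes> IA"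
    by (simp add: tensor_assoc tensor_comp mu_eta_right)
  show ?thesis unfolding beta_def using comp_eq_precompose[OF 2, of nu] 1 by (simp add: tensor_id)
qed

lemma nabla_preunit: "nabla A C psi \<cdot> nu = nu"
proof -
  have 1: "(IA \<otimes> nu) \<cdot> eta A = ((eta A \<otimes> IC) \<otimes> IA) \<cdot> nu"
    using tensor_factor_right_first[of "eta A" nu] tensor_factor_left_first[of "eta A" nu]
    by (simp add: tensor_id tensor_assoc)
  have 2: "(psi \<otimes> IA) \<cdot> ((eta A \<otimes> IC) \<otimes> IA) = (psi \<cdot> (eta A \<otimes> IC)) \<otimes> IA"
    by (simp add: tensor_comp)
  have "nabla A C psi \<cdot> nu = (IC \<otimes> mu A) \<cdot> (psi \<otimes> IA) \<cdot> (IA \<otimes> nu) \<cdot> eta A"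
    unfolding nabla_def using 1 comp_eq_precompose[OF 2] by simp
  also have "\<dots> = beta A C nu \<cdot> eta A" using preunit_psi by (simp flip: comp_assoc)
  finally show ?thesis using beta_eta by simp
qed

lemma nabla_beta: "nabla A C psi \<cdot> beta A C nu = beta A C nu"
proof -
  have "(nabla A C psi \<otimes> IA) \<cdot> (nu \<otimes> IA) = nu \<otimes> IA"
    using nabla_preunit by (simp add: tensor_comp)
  moreover have "nabla A C psi \<cdot> beta A C nu = (IC \<otimes> mu A) \<cdot> (nabla A C psi \<otimes> IA) \<cdot> (nu \<otimes> IA)"
    unfolding beta_def using comp_eq_precompose[OF nabla_right_mult, of "nu \<otimes> IA"] by simp
  ultimately show ?thesis unfolding beta_def by simp
qed

lemma sigma_beta: "(IC \<otimes> mu A) \<cdot> (sigma \<otimes> IA) \<cdot> (IC \<otimes> beta A C nu) = nabla A C psi"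
proof -
  have 1: "IC \<otimes> beta A C nu = (idm (C \<odot> C) \<otimes> mu A) \<cdot> (IC \<otimes> (nu \<otimes> IA))"
    unfolding beta_def by (simp add: id_tensor_comp id_tensor_obj tensor_assoc)
  have 2: "(IC \<otimes> mu A) \<cdot> (sigma \<otimes> IA) \<cdot> (IC \<otimes> beta A C nu)
      = (IC \<otimes> mu A) \<cdot> (((IC \<otimes> mu A) \<cdot> (sigma \<otimes> IA)) \<otimes> IA) \<cdot> (IC \<otimes> (nu \<otimes> IA))"
    using comp_eq_precompose[OF right_mult_assoc[of sigma], of "IC \<otimes> (nu \<otimes> IA)"] 1 by simp
  have 3: "(((IC \<otimes> mu A) \<cdot> (sigma \<otimes> IA)) \<otimes> IA) \<cdot> (IC \<otimes> (nu \<otimes> IA))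
      = ((IC \<otimes> mu A) \<cdot> (sigma \<otimes> IA) \<cdot> (IC \<otimes> nu)) \<otimes> IA"
    by (simp add: tensor_assoc comp_tensor_id)
  have 4: "((IC \<otimes> mu A) \<cdot> (sigma \<otimes> IA) \<cdot> (IC \<otimes> nu)) \<otimes> IA
      = (nabla A C psi \<otimes> IA) \<cdot> (IC \<otimes> (eta A \<otimes> IA))"
    using preunit_sigma by (simp add: comp_tensor_id tensor_assoc)
  have 5: "(IC \<otimes> mu A) \<cdot> (nabla A C psi \<otimes> IA) \<cdot> (IC \<otimes> (eta A \<otimes> IA)) = nabla A C psi"
    using comp_eq_precompose[OF nabla_right_mult[symmetric], of "IC \<otimes> (eta A \<otimes> IA)"] mu_eta_left
    by (simp add: tensor_comp tensor_id)
  show ?thesis by (simp only: 2 3 4 5)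
qed

lemma psi_beta_mult: "(IC \<otimes> mu A) \<cdot> (psi \<otimes> mu A) \<cdot> (IA \<otimes> (nu \<otimes> IA)) = beta A C nu \<cdot> mu A"
proof -
  have assoc: "(IC \<otimes> mu A) \<cdot> (idm (C \<odot> carr A) \<otimes> mu A) = (IC \<otimes> mu A) \<cdot> (IC \<otimes> (mu A \<otimes> IA))"
    by (simp add: id_tensor_obj tensor_assoc tensor_comp mu_assoc)
  have 1: "(IC \<otimes> mu A) \<cdot> (psi \<otimes> mu A)
      = (IC \<otimes> mu A) \<cdot> (IC \<otimes> (mu A \<otimes> IA)) \<cdot> (psi \<otimes> idm (carr A \<odot> carr A))"
    using tensor_factor_left_first[of psi "mu A"] comp_eq_precompose[OF assoc, of "psi \<otimes> idm (carr A \<odot> carr A)"]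
    by simp
  have 2: "(IC \<otimes> (mu A \<otimes> IA)) \<cdot> (psi \<otimes> idm (carr A \<odot> carr A)) \<cdot> (IA \<otimes> (nu \<otimes> IA)) = beta A C nu \<otimes> IA"
    by (simp add: preunit_psi[symmetric] comp_tensor_id tensor_assoc id_tensor_obj)
  show ?thesis using comp_eq_precompose[OF 1, of "IA \<otimes> (nu \<otimes> IA)"] 2 beta_mult by simp
qed

lemma mu_cp_id_beta: "mu_cp A C psi sigma \<cdot> (idm (C \<odot> carr A) \<otimes> beta A C nu) = (IC \<otimes> mu A) \<cdot> (nabla A C psi \<otimes> IA)"
proof -
  have 1: "(IC \<otimes> (psi \<otimes> IA)) \<cdot> (idm (C \<odot> carr A) \<otimes> beta A C nu)
      = IC \<otimes> ((psi \<otimes> mu A) \<cdot> (IA \<otimes> (nu \<otimes> IA)))"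
  proof -
    have "IA \<otimes> beta A C nu = (IA \<otimes> (IC \<otimes> mu A)) \<cdot> (IA \<otimes> (nu \<otimes> IA))"
      unfolding beta_def by (simp add: id_tensor_comp)
    moreover have "(psi \<otimes> IA) \<cdot> (IA \<otimes> (IC \<otimes> mu A)) = psi \<otimes> mu A"
      by (simp add: tensor_assoc[symmetric] tensor_id tensor_comp)
    ultimately have "(psi \<otimes> IA) \<cdot> (IA \<otimes> beta A C nu) = (psi \<otimes> mu A) \<cdot> (IA \<otimes> (nu \<otimes> IA))"
      using comp_eq_precompose[of "psi \<otimes> IA" "IA \<otimes> (IC \<otimes> mu A)"] by simp
    then show ?thesis by (simp add: id_tensor_obj tensor_assoc tensor_comp)
  qed
  have 2: "(sigma \<otimes> mu A) \<cdot> (IC \<otimes> ((psi \<otimes> mu A) \<cdot> (IA \<otimes> (nu \<otimes> IA))))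
      = (sigma \<otimes> IA) \<cdot> (IC \<otimes> (beta A C nu \<cdot> mu A))"
    using tensor_factor_right_first[of sigma "mu A"] psi_beta_mult[symmetric]
    by (simp add: id_tensor_obj tensor_assoc tensor_comp)
  have 3: "(IC \<otimes> mu A) \<cdot> (sigma \<otimes> IA) \<cdot> (IC \<otimes> (beta A C nu \<cdot> mu A)) = nabla A C psi \<cdot> (IC \<otimes> mu A)"
    using comp3_eq_precompose[OF sigma_beta, of "IC \<otimes> mu A"] by (simp add: id_tensor_comp)
  show ?thesis unfolding mu_cp_def using 1 2 3 nabla_right_mult by simp
qed

lemma mu_cp_beta_right:
  assumes [simp]: "x \<in> Arr M" "Cod M x = C \<odot> carr A" and fixed: "nabla A C psi \<cdot> x = x"
  shows "mu_cp A C psi sigma \<cdot> (x \<otimes> beta A C nu) = (IC \<otimes> mu A) \<cdot> (x \<otimes> IA)"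
proof -
  have "x \<otimes> beta A C nu = (idm (C \<odot> carr A) \<otimes> beta A C nu) \<cdot> (x \<otimes> IA)"
    using tensor_factor_left_first[of x "beta A C nu"] by simp
  then have "mu_cp A C psi sigma \<cdot> (x \<otimes> beta A C nu) = (IC \<otimes> mu A) \<cdot> (nabla A C psi \<otimes> IA) \<cdot> (x \<otimes> IA)"
    using comp_eq_precompose[OF mu_cp_id_beta, of "x \<otimes> IA"] by simp
  then show ?thesis using fixed by (simp add: tensor_comp)
qed

end


locale crossed_biproduct_trivial_cocycle =
  crossed_product_with_preunit M A "carr C" psi sigma nu
  for M :: "('o,'m) bcat" and A C :: "('o,'m) stru" and psi sigma nu :: 'm +
  fixes chi tau ups :: 'm
  assumes coalgebra_A: "coalgebra A" and coalgebra_C: "coalgebra C"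
    and crossed_coproduct: "weak_crossed_coproduct C (carr A) chi tau ups"
    and nabla_eq_gamma: "nabla A (carr C) psi = gamma C (carr A) chi"
    and counit_preunit: "(eps C \<otimes> idm (carr A)) \<cdot> nu = eta A"
    and tau_trivial: "tau = (eps C \<otimes> dlt A) \<cdot> nabla A (carr C) psi"
begin

lemma coproduct_typing [simp]:
  "dlt A \<in> Arr M" "Dom M (dlt A) = carr A" "Cod M (dlt A) = carr A \<odot> carr A"
  "eps A \<in> Arr M" "Dom M (eps A) = carr A" "Cod M (eps A) = K"
  "dlt C \<in> Arr M" "Dom M (dlt C) = carr C" "Cod M (dlt C) = carr C \<odot> carr C"
  "eps C \<in> Arr M" "Dom M (eps C) = carr C" "Cod M (eps C) = K"
  "chi \<in> Arr M" "Dom M chi = carr C \<odot> carr A" "Cod M chi = carr A \<odot> carr C"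
  "tau \<in> Arr M" "Dom M tau = carr C \<odot> carr A" "Cod M tau = carr A \<odot> carr A"
  using coalgebra_A coalgebra_C crossed_coproduct
  unfolding coalgebra_def weak_crossed_coproduct_def Let_def hom_def by auto

lemma counit_C_left: "(eps C \<otimes> IC) \<cdot> dlt C = IC"
  using coalgebra_C unfolding coalgebra_def Let_def by auto

lemma chi_comultiplicative: "(chi \<otimes> IC) \<cdot> (IC \<otimes> chi) \<cdot> (dlt C \<otimes> IA) = (IA \<otimes> dlt C) \<cdot> chi"
  and tau_twisted: "(tau \<otimes> IC) \<cdot> (IC \<otimes> chi) \<cdot> (dlt C \<otimes> IA)
      = (IA \<otimes> chi) \<cdot> (chi \<otimes> IA) \<cdot> (IC \<otimes> tau) \<cdot> (dlt C \<otimes> IA)"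
  and tau_gamma: "tau \<cdot> gamma C (carr A) chi = tau"
  using crossed_coproduct unfolding weak_crossed_coproduct_def Let_def by auto

lemma delta_cp_typing [simp]:
  "delta_cp C (carr A) chi tau \<in> Arr M"
  "Dom M (delta_cp C (carr A) chi tau) = carr C \<odot> carr A"
  "Cod M (delta_cp C (carr A) chi tau) = carr C \<odot> carr A \<odot> carr C \<odot> carr A"
  by (simp_all add: delta_cp_def)

lemma counit_tensor_mult: "(eps C \<otimes> IA) \<cdot> (IC \<otimes> mu A) = mu A \<cdot> ((eps C \<otimes> IA) \<otimes> IA)"
proof -
  have "(eps C \<otimes> IA) \<cdot> (IC \<otimes> mu A) = eps C \<otimes> mu A" by (simp add: tensor_comp)
  also have "\<dots> = mu A \<cdot> ((eps C \<otimes> IA) \<otimes> IA)"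
    using tensor_factor_left_first[of "eps C" "mu A"] by (simp add: tensor_id tensor_assoc)
  finally show ?thesis .
qed

lemma counit_beta: "(eps C \<otimes> IA) \<cdot> beta A (carr C) nu = IA"
proof -
  have "((eps C \<otimes> IA) \<otimes> IA) \<cdot> (nu \<otimes> IA) = eta A \<otimes> IA"
    using counit_preunit by (simp add: tensor_comp)
  then show ?thesis
    unfolding beta_def using comp_eq_precompose[OF counit_tensor_mult, of "nu \<otimes> IA"] mu_eta_left by simp
qed

definition chi_eps :: 'm where
  "chi_eps = (IA \<otimes> eps C) \<cdot> chi"

lemma chi_eps_typing [simp]:
  "chi_eps \<in> Arr M" "Dom M chi_eps = carr C \<odot> carr A" "Cod M chi_eps = carr A"
  by (simp_all add: chi_eps_def)

lemma counit_nabla: "(eps C \<otimes> IA) \<cdot> nabla A (carr C) psi = chi_eps"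
proof -
  have 1: "(eps C \<otimes> IA) \<cdot> (IC \<otimes> (IA \<otimes> eps C)) = (IA \<otimes> eps C) \<cdot> (eps C \<otimes> idm (carr A \<odot> carr C))"
    using tensor_factor_left_first[of "eps C" "IA \<otimes> eps C"] by (simp add: tensor_comp)
  have 2: "(eps C \<otimes> idm (carr A \<odot> carr C)) \<cdot> (IC \<otimes> chi) = chi \<cdot> ((eps C \<otimes> IC) \<otimes> IA)"
    using tensor_factor_left_first[of "eps C" chi] by (simp add: tensor_comp tensor_id tensor_assoc)
  have 3: "((eps C \<otimes> IC) \<otimes> IA) \<cdot> (dlt C \<otimes> IA) = IC \<otimes> IA"
    using counit_C_left by (simp add: tensor_comp)
  show ?thesis
    unfolding chi_eps_def nabla_eq_gamma gamma_def
    using comp_eq_precompose[OF 1, of "(IC \<otimes> chi) \<cdot> (dlt C \<otimes> IA)"] comp_eq_precompose[OF 2, of "dlt C \<otimes> IA"] 3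
    by (simp add: tensor_id)
qed

lemma tau_eq: "tau = dlt A \<cdot> chi_eps"
proof -
  have "eps C \<otimes> dlt A = dlt A \<cdot> (eps C \<otimes> IA)"
    using tensor_factor_left_first[of "eps C" "dlt A"] by simp
  then show ?thesis
    using tau_trivial counit_nabla comp_eq_precompose[of "dlt A" "eps C \<otimes> IA" "eps C \<otimes> dlt A" "nabla A (carr C) psi"]
    by simp
qed

lemma chi_eps_tensor_chi:
  "(chi_eps \<otimes> chi_eps) \<cdot> (IC \<otimes> (chi \<otimes> IA)) \<cdot> (dlt C \<otimes> (IA \<otimes> IA)) = (IA \<otimes> chi_eps) \<cdot> (chi \<otimes> IA)"
proof -
  have 1: "(IC \<otimes> (chi \<otimes> IA)) \<cdot> (dlt C \<otimes> (IA \<otimes> IA)) = ((IC \<otimes> chi) \<cdot> (dlt C \<otimes> IA)) \<otimes> IA"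
    by (simp add: tensor_assoc comp_tensor_id)
  have 2: "chi_eps \<otimes> chi_eps
      = (IA \<otimes> chi_eps) \<cdot> ((IA \<otimes> eps C) \<otimes> idm (carr C \<odot> carr A)) \<cdot> (chi \<otimes> idm (carr C \<odot> carr A))"
    using tensor_factor_left_first[of chi_eps chi_eps] unfolding chi_eps_def by (simp add: comp_tensor_id)
  have 3: "(chi \<otimes> idm (carr C \<odot> carr A)) \<cdot> (((IC \<otimes> chi) \<cdot> (dlt C \<otimes> IA)) \<otimes> IA) = ((IA \<otimes> dlt C) \<cdot> chi) \<otimes> IA"
  proof -
    have "(chi \<otimes> idm (carr C \<odot> carr A)) \<cdot> (((IC \<otimes> chi) \<cdot> (dlt C \<otimes> IA)) \<otimes> IA)
        = ((chi \<otimes> IC) \<cdot> (IC \<otimes> chi) \<cdot> (dlt C \<otimes> IA)) \<otimes> IA"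
      by (simp add: id_tensor_obj tensor_assoc[symmetric] comp_tensor_id)
    then show ?thesis using chi_comultiplicative by simp
  qed
  have 4: "((IA \<otimes> eps C) \<otimes> idm (carr C \<odot> carr A)) \<cdot> (((IA \<otimes> dlt C) \<cdot> chi) \<otimes> IA) = chi \<otimes> IA"
  proof -
    have "(IA \<otimes> eps C) \<otimes> idm (carr C \<odot> carr A) = ((IA \<otimes> eps C) \<otimes> IC) \<otimes> IA"
      by (simp add: id_tensor_obj tensor_assoc)
    moreover have "((IA \<otimes> eps C) \<otimes> IC) \<cdot> (IA \<otimes> dlt C) = idm (carr A \<odot> carr C)"
      using counit_C_left by (simp add: tensor_assoc tensor_comp tensor_id)
    ultimately show ?thesis
      using comp_eq_precompose[of "((IA \<otimes> eps C) \<otimes> IC)" "IA \<otimes> dlt C" _ chi] by (simp add: tensor_comp)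
  qed
  show ?thesis using 1 2 3 4 by simp
qed

text \<open>The twisted condition moves tau in front of chi, after which the counit of C is absorbed
  by tau \<circ> Gamma = tau.\<close>
lemma delta_cp_chi_eps: "(chi_eps \<otimes> chi_eps) \<cdot> delta_cp C (carr A) chi tau = dlt A \<cdot> chi_eps"
proof -
  have split: "dlt C \<otimes> tau = (dlt C \<otimes> (IA \<otimes> IA)) \<cdot> (IC \<otimes> tau)"
    using tensor_factor_right_first[of "dlt C" tau] by (simp add: tensor_id)
  have eps_slide: "(IA \<otimes> (IA \<otimes> eps C)) \<cdot> (tau \<otimes> IC) = tau \<cdot> (IC \<otimes> (IA \<otimes> eps C))"
  proof -
    have "(IA \<otimes> (IA \<otimes> eps C)) \<cdot> (tau \<otimes> IC) = tau \<otimes> eps C"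
      by (simp add: tensor_assoc[symmetric] tensor_id tensor_comp)
    also have "\<dots> = tau \<cdot> (IC \<otimes> (IA \<otimes> eps C))"
      using tensor_factor_right_first[of tau "eps C"] by (simp add: tensor_assoc[symmetric] tensor_id)
    finally show ?thesis .
  qed
  have "(chi_eps \<otimes> chi_eps) \<cdot> delta_cp C (carr A) chi tau
      = (IA \<otimes> chi_eps) \<cdot> (chi \<otimes> IA) \<cdot> (IC \<otimes> tau) \<cdot> (dlt C \<otimes> IA)"
    unfolding delta_cp_def split
    using comp3_eq_precompose[OF chi_eps_tensor_chi, of "(IC \<otimes> tau) \<cdot> (dlt C \<otimes> IA)"] by simp
  also have "\<dots> = (IA \<otimes> (IA \<otimes> eps C)) \<cdot> (IA \<otimes> chi) \<cdot> (chi \<otimes> IA) \<cdot> (IC \<otimes> tau) \<cdot> (dlt C \<otimes> IA)"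
    unfolding chi_eps_def by (simp add: id_tensor_comp)
  also have "\<dots> = (IA \<otimes> (IA \<otimes> eps C)) \<cdot> (tau \<otimes> IC) \<cdot> (IC \<otimes> chi) \<cdot> (dlt C \<otimes> IA)"
    using tau_twisted by simp
  also have "\<dots> = tau \<cdot> (IC \<otimes> (IA \<otimes> eps C)) \<cdot> (IC \<otimes> chi) \<cdot> (dlt C \<otimes> IA)"
    using comp_eq_precompose[OF eps_slide, of "(IC \<otimes> chi) \<cdot> (dlt C \<otimes> IA)"] by simp
  also have "\<dots> = tau"
    using tau_gamma unfolding gamma_def by simp
  finally show ?thesis using tau_eq by simp
qed

end


locale crossed_biproduct_realization =
  crossed_biproduct_trivial_cocycle M A C psi sigma nu chi tau ups
  for M :: "('o,'m) bcat" and A C :: "('o,'m) stru" and psi sigma nu chi tau ups :: 'm +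
  fixes D :: "('o,'m) stru" and X :: 'o and i p phi phi' :: 'm
  assumes algebra_D: "algebra D" and coalgebra_D: "coalgebra D"
    and splitting: "X \<in> Obj M" "hom i X (carr C \<odot> carr A)" "hom p (carr C \<odot> carr A) X"
      "p \<cdot> i = idm X" "i \<cdot> p = nabla A (carr C) psi"
    and iso: "hom phi' (carr D) X" "phi \<cdot> phi' = idm (carr D)" "phi' \<cdot> phi = idm X"
    and iso_morphism: "let P = \<lparr>carr = X,
                  mu = p \<cdot> mu_cp A (carr C) psi sigma \<cdot> (i \<otimes> i),
                  eta = p \<cdot> nu,
                  dlt = (p \<otimes> p) \<cdot> delta_cp C (carr A) chi tau \<cdot> i,
                  eps = ups \<cdot> i\<rparr>
         in alg_mor P D phi \<and> coalg_mor P D phi"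
    and ups_trivial: "ups = (eps C \<otimes> eps A) \<cdot> nabla A (carr C) psi"
    and delta_cp_beta: "delta_cp C (carr A) chi tau \<cdot> beta A (carr C) nu
      = (beta A (carr C) nu \<otimes> beta A (carr C) nu) \<cdot> dlt A"
begin

lemma realization_typing [simp]:
  "carr D \<in> Obj M" "X \<in> Obj M"
  "mu D \<in> Arr M" "Dom M (mu D) = carr D \<odot> carr D" "Cod M (mu D) = carr D"
  "eta D \<in> Arr M" "Dom M (eta D) = K" "Cod M (eta D) = carr D"
  "dlt D \<in> Arr M" "Dom M (dlt D) = carr D" "Cod M (dlt D) = carr D \<odot> carr D"
  "eps D \<in> Arr M" "Dom M (eps D) = carr D" "Cod M (eps D) = K"
  "i \<in> Arr M" "Dom M i = X" "Cod M i = carr C \<odot> carr A"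
  "p \<in> Arr M" "Dom M p = carr C \<odot> carr A" "Cod M p = X"
  "phi \<in> Arr M" "Dom M phi = X" "Cod M phi = carr D"
  "phi' \<in> Arr M" "Dom M phi' = carr D" "Cod M phi' = X"
  "ups \<in> Arr M" "Dom M ups = carr C \<odot> carr A" "Cod M ups = K"
  using algebra_D coalgebra_D splitting iso iso_morphism ups_trivial
  unfolding algebra_def coalgebra_def alg_mor_def Let_def hom_def by auto

lemma phi_mult: "phi \<cdot> p \<cdot> mu_cp A (carr C) psi sigma \<cdot> (i \<otimes> i) = mu D \<cdot> (phi \<otimes> phi)"
  and phi_unit: "phi \<cdot> p \<cdot> nu = eta D"
  and phi_comult: "dlt D \<cdot> phi = (phi \<otimes> phi) \<cdot> (p \<otimes> p) \<cdot> delta_cp C (carr A) chi tau \<cdot> i"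
  and phi_counit: "eps D \<cdot> phi = ups \<cdot> i"
  using iso_morphism unfolding alg_mor_def coalg_mor_def Let_def by auto

lemma nabla_i: "nabla A (carr C) psi \<cdot> i = i"
  using comp_eq_precompose[OF splitting(5), of i] splitting(4) by simp

lemma nabla_i_phi': "nabla A (carr C) psi \<cdot> i \<cdot> phi' = i \<cdot> phi'"
  using comp_eq_precompose[OF nabla_i, of phi'] by simp

lemma i_p_beta: "i \<cdot> p \<cdot> beta A (carr C) nu = beta A (carr C) nu"
  using comp_eq_precompose[OF splitting(5), of "beta A (carr C) nu"] nabla_beta by simp

definition incl :: 'm where
  "incl = phi \<cdot> p \<cdot> beta A (carr C) nu"

definition proj :: 'm where
  "proj = (eps C \<otimes> IA) \<cdot> i \<cdot> phi'"

lemma incl_typing [simp]: "incl \<in> Arr M" "Dom M incl = carr A" "Cod M incl = carr D"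
  by (simp_all add: incl_def)

lemma proj_typing [simp]: "proj \<in> Arr M" "Dom M proj = carr D" "Cod M proj = carr A"
  by (simp_all add: proj_def)

lemma incl_mult: "incl \<cdot> mu A = mu D \<cdot> (incl \<otimes> incl)"
proof -
  have "incl \<otimes> incl = (phi \<otimes> phi) \<cdot> ((p \<cdot> beta A (carr C) nu) \<otimes> (p \<cdot> beta A (carr C) nu))"
    unfolding incl_def by (simp add: interchange)
  then have "mu D \<cdot> (incl \<otimes> incl)
      = phi \<cdot> p \<cdot> mu_cp A (carr C) psi sigma \<cdot> (i \<otimes> i) \<cdot> ((p \<cdot> beta A (carr C) nu) \<otimes> (p \<cdot> beta A (carr C) nu))"
    using comp_eq_precompose[OF phi_mult[symmetric]] by simp
  also have "\<dots> = phi \<cdot> p \<cdot> mu_cp A (carr C) psi sigma \<cdot> (beta A (carr C) nu \<otimes> beta A (carr C) nu)"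
    using i_p_beta by (simp add: tensor_comp)
  also have "\<dots> = phi \<cdot> p \<cdot> beta A (carr C) nu \<cdot> mu A"
    using mu_cp_beta_right[of "beta A (carr C) nu"] nabla_beta beta_mult by simp
  finally show ?thesis unfolding incl_def by simp
qed

lemma incl_unit: "incl \<cdot> eta A = eta D"
  unfolding incl_def using beta_eta phi_unit by simp

lemma incl_comult: "dlt D \<cdot> incl = (incl \<otimes> incl) \<cdot> dlt A"
proof -
  have "dlt D \<cdot> incl = (phi \<otimes> phi) \<cdot> (p \<otimes> p) \<cdot> delta_cp C (carr A) chi tau \<cdot> i \<cdot> p \<cdot> beta A (carr C) nu"
    unfolding incl_def using comp_eq_precompose[OF phi_comult, of "p \<cdot> beta A (carr C) nu"] by simp
  also have "\<dots> = (phi \<otimes> phi) \<cdot> (p \<otimes> p) \<cdot> (beta A (carr C) nu \<otimes> beta A (carr C) nu) \<cdot> dlt A"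
    using i_p_beta delta_cp_beta by simp
  also have "\<dots> = (incl \<otimes> incl) \<cdot> dlt A"
    unfolding incl_def by (simp add: interchange)
  finally show ?thesis .
qed

lemma counit_tensor: "eps C \<otimes> eps A = eps A \<cdot> (eps C \<otimes> IA)"
  using tensor_factor_left_first[of "eps C" "eps A"] by simp

lemma incl_counit: "eps D \<cdot> incl = eps A"
proof -
  have "eps D \<cdot> incl = ups \<cdot> beta A (carr C) nu"
    unfolding incl_def using comp_eq_precompose[OF phi_counit, of "p \<cdot> beta A (carr C) nu"] i_p_beta by simp
  also have "\<dots> = eps A"
    unfolding ups_trivial counit_tensor using nabla_beta counit_beta by simp
  finally show ?thesis .
qed

lemma proj_phi: "proj \<cdot> phi = (eps C \<otimes> IA) \<cdot> i"
  unfolding proj_def using iso(3) by simp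

lemma comult_D: "dlt D = (phi \<otimes> phi) \<cdot> (p \<otimes> p) \<cdot> delta_cp C (carr A) chi tau \<cdot> i \<cdot> phi'"
proof -
  have "dlt D = dlt D \<cdot> phi \<cdot> phi'" using iso(2) by simp
  then show ?thesis using comp_eq_precompose[OF phi_comult, of phi'] by simp
qed

lemma proj_comult: "dlt A \<cdot> proj = (proj \<otimes> proj) \<cdot> dlt D"
proof -
  have 1: "(proj \<otimes> proj) \<cdot> (phi \<otimes> phi) = ((eps C \<otimes> IA) \<cdot> i) \<otimes> ((eps C \<otimes> IA) \<cdot> i)"
    using proj_phi by (simp add: tensor_comp)
  have 2: "(((eps C \<otimes> IA) \<cdot> i) \<otimes> ((eps C \<otimes> IA) \<cdot> i)) \<cdot> (p \<otimes> p) = chi_eps \<otimes> chi_eps"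
    using splitting(5) counit_nabla by (simp add: tensor_comp)
  have "(proj \<otimes> proj) \<cdot> dlt D = (chi_eps \<otimes> chi_eps) \<cdot> delta_cp C (carr A) chi tau \<cdot> i \<cdot> phi'"
    unfolding comult_D
    using comp_eq_precompose[OF 1, of "(p \<otimes> p) \<cdot> delta_cp C (carr A) chi tau \<cdot> i \<cdot> phi'"]
      comp_eq_precompose[OF 2, of "delta_cp C (carr A) chi tau \<cdot> i \<cdot> phi'"]
    by simp
  also have "\<dots> = dlt A \<cdot> chi_eps \<cdot> i \<cdot> phi'"
    using comp_eq_precompose[OF delta_cp_chi_eps, of "i \<cdot> phi'"] by simp
  also have "\<dots> = dlt A \<cdot> proj"
    unfolding proj_def counit_nabla[symmetric] using nabla_i_phi' by simp
  finally show ?thesis by simp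
qed

lemma proj_counit: "eps A \<cdot> proj = eps D"
proof -
  have "eps A \<cdot> proj = ups \<cdot> i \<cdot> phi'"
    unfolding proj_def ups_trivial using counit_tensor nabla_i_phi' by simp
  also have "\<dots> = eps D \<cdot> phi \<cdot> phi'"
    using comp_eq_precompose[OF phi_counit, of phi'] by simp
  also have "\<dots> = eps D"
    using iso(2) by simp
  finally show ?thesis .
qed

lemma proj_incl: "proj \<cdot> incl = IA"
proof -
  have "proj \<cdot> incl = (eps C \<otimes> IA) \<cdot> i \<cdot> p \<cdot> beta A (carr C) nu"
    unfolding incl_def using comp_eq_precompose[OF proj_phi, of "p \<cdot> beta A (carr C) nu"] by simp
  then show ?thesis using i_p_beta counit_beta by simp
qed

lemma proj_mult_incl: "proj \<cdot> mu D \<cdot> (idm (carr D) \<otimes> incl) = mu A \<cdot> (proj \<otimes> IA)"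
proof -
  let ?x = "i \<cdot> phi'"
  have 1: "idm (carr D) \<otimes> incl = (phi \<otimes> phi) \<cdot> (phi' \<otimes> (p \<cdot> beta A (carr C) nu))"
    unfolding incl_def using iso(2) by (simp add: tensor_comp)
  have "mu D \<cdot> (idm (carr D) \<otimes> incl)
      = phi \<cdot> p \<cdot> mu_cp A (carr C) psi sigma \<cdot> (i \<otimes> i) \<cdot> (phi' \<otimes> (p \<cdot> beta A (carr C) nu))"
    unfolding 1 using comp_eq_precompose[OF phi_mult[symmetric], of "phi' \<otimes> (p \<cdot> beta A (carr C) nu)"] by simp
  also have "\<dots> = phi \<cdot> p \<cdot> mu_cp A (carr C) psi sigma \<cdot> (?x \<otimes> beta A (carr C) nu)"
    using i_p_beta by (simp add: tensor_comp)
  also have "\<dots> = phi \<cdot> p \<cdot> (IC \<otimes> mu A) \<cdot> (?x \<otimes> IA)"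
    using mu_cp_beta_right[of ?x] nabla_i_phi' by simp
  finally have 2: "mu D \<cdot> (idm (carr D) \<otimes> incl) = phi \<cdot> p \<cdot> (IC \<otimes> mu A) \<cdot> (?x \<otimes> IA)" .
  have "proj \<cdot> mu D \<cdot> (idm (carr D) \<otimes> incl)
      = (eps C \<otimes> IA) \<cdot> nabla A (carr C) psi \<cdot> (IC \<otimes> mu A) \<cdot> (?x \<otimes> IA)"
    using 2 comp_eq_precompose[OF proj_phi, of "p \<cdot> (IC \<otimes> mu A) \<cdot> (?x \<otimes> IA)"]
      comp_eq_precompose[OF splitting(5), of "(IC \<otimes> mu A) \<cdot> (?x \<otimes> IA)"]
    by simp
  also have "\<dots> = (eps C \<otimes> IA) \<cdot> (IC \<otimes> mu A) \<cdot> (?x \<otimes> IA)"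
    using comp_eq_precompose[OF nabla_right_mult, of "?x \<otimes> IA"] nabla_i_phi' by (simp add: tensor_comp)
  also have "\<dots> = mu A \<cdot> (proj \<otimes> IA)"
    unfolding proj_def using comp_eq_precompose[OF counit_tensor_mult, of "?x \<otimes> IA"] by (simp add: tensor_comp)
  finally show ?thesis .
qed

lemma weak_projection_incl_proj:
  assumes "weak_bialgebra D" and "weak_hopf A lam"
  shows "weak_projection D A lam incl proj"
  unfolding weak_projection_def alg_mor_def coalg_mor_def hom_def
  using assms incl_mult incl_unit incl_comult incl_counit
    proj_comult proj_counit proj_incl proj_mult_incl
  by simp

end


theorem theorem3p12:
  fixes M :: "('o,'m) bcat"
    and D C B :: "('o,'m) stru"
    and lam psi sigma chi tau nu ups :: 'm
  assumes "bc.sbmc M"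
    and "bc.weak_bialgebra M D"
    and "bc.coalgebra M C"
    and "bc.weak_hopf M B lam"
    and "bc.weak_crossed_biproduct M D C B psi sigma chi tau nu ups"
    and "Comp M (bc.delta_cp M C (carr B) chi tau) (bc.beta M B (carr C) nu)
         = Comp M (Ten M (bc.beta M B (carr C) nu) (bc.beta M B (carr C) nu)) (dlt B)"
    and "tau = Comp M (Ten M (eps C) (dlt B)) (bc.nabla M B (carr C) psi)"
    and "ups = Comp M (Ten M (eps C) (eps B)) (bc.nabla M B (carr C) psi)"
  shows "\<exists>f g. bc.weak_projection M D B lam f g"
proof -
  interpret bc M .
  have coalgebra_B: "coalgebra B" and algebra_D: "algebra D" and coalgebra_D: "coalgebra D"
    using assms(2,4) unfolding weak_hopf_def weak_bialgebra_def by auto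
  obtain X i p phi phi' where
    "X \<in> Obj M" "hom i X (carr C \<odot> carr B)" "hom p (carr C \<odot> carr B) X"
    "p \<cdot> i = idm X" "i \<cdot> p = nabla B (carr C) psi"
    "hom phi' (carr D) X" "phi \<cdot> phi' = idm (carr D)" "phi' \<cdot> phi = idm X"
    "let P = \<lparr>carr = X,
              mu = p \<cdot> mu_cp B (carr C) psi sigma \<cdot> (i \<otimes> i),
              eta = p \<cdot> nu,
              dlt = (p \<otimes> p) \<cdot> delta_cp C (carr B) chi tau \<cdot> i,
              eps = ups \<cdot> i\<rparr>
     in alg_mor P D phi \<and> coalg_mor P D phi"
    using assms(5) unfolding weak_crossed_biproduct_def by blast
  then interpret crossed_biproduct_realization M B C psi sigma nu chi tau ups D X i p phi phi'
    using assms(1,3,5-8) coalgebra_B algebra_D coalgebra_D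
    by unfold_locales (auto simp: weak_crossed_biproduct_def)
  show ?thesis
    using weak_projection_incl_proj[OF assms(2,4)] by blast
qed

end
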